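(* Let $G=\prod_{1\leq i\leq k}C_{p^{r_i}}$ be a finite non-cyclic abelian $p$-group with $r_1\geq r_2\geq\dots\geq r_k$ and $k\geq 2$, and let $x_1$ be a generator of the factor $C_{p^{r_1}}$. Then the set of dominant vertices of $\Delta_D(G)$ is $\langle x_1^{p^{r_2}}\rangle$.
   Context: $C_n$ denotes the cyclic group of order $n$. The deep commuting graph $\Delta_D(G)$ has vertex set $G$, distinct vertices adjacent iff their preimages commute in a Schur cover $\tilde G$ of $G$ (a central extension $\{e\}\to M(G)\to\tilde G\to G\to\{e\}$ with kernel contained in $Z(\tilde G)\cap[\tilde G,\tilde G]$, of maximal order; $M(G)$ the Schur multiplier). A vertex is dominant if it is adjacent to every other vertex. *)

theory Defs
  imports "HOL-Algebra.Algebra"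
begin

definition grp_center :: "('a, 'b) monoid_scheme \<Rightarrow> 'a set" where
  "grp_center H = {z \<in> carrier H. \<forall>y \<in> carrier H. z \<otimes>\<^bsub>H\<^esub> y = y \<otimes>\<^bsub>H\<^esub> z}"

definition stem_extension ::
  "('c, 'd) monoid_scheme \<Rightarrow> ('c \<Rightarrow> 'a) \<Rightarrow> ('a, 'b) monoid_scheme \<Rightarrow> bool" where
  "stem_extension H \<pi> G \<longleftrightarrow> group H \<and> group G \<and> \<pi> \<in> hom H G \<and> \<pi> ` carrier H = carrier G
     \<and> kernel H G \<pi> \<subseteq> grp_center H \<inter> derived H (carrier H)"

text \<open>A Schur cover: a stem extension with finite kernel of maximal order among all
  stem extensions of G (every group is isomorphic to one with carrier in a type of
  sufficient size; for finite G all stem extensions are finite, so groups on nat suffice).\<close>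
definition schur_cover ::
  "('c, 'd) monoid_scheme \<Rightarrow> ('c \<Rightarrow> 'a) \<Rightarrow> ('a, 'b) monoid_scheme \<Rightarrow> bool" where
  "schur_cover H \<pi> G \<longleftrightarrow> stem_extension H \<pi> G \<and> finite (kernel H G \<pi>) \<and>
     (\<forall>(H' :: nat monoid) (\<pi>' :: nat \<Rightarrow> 'a). stem_extension H' \<pi>' G \<longrightarrow>
        card (kernel H' G \<pi>') \<le> card (kernel H G \<pi>))"

text \<open>Adjacency in the deep commuting graph (computed via a Schur cover H, \<pi>):
  distinct g, h are adjacent iff their preimages commute.\<close>
definition deep_adj ::
  "('c, 'd) monoid_scheme \<Rightarrow> ('c \<Rightarrow> 'a) \<Rightarrow> 'a \<Rightarrow> 'a \<Rightarrow> bool" where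
  "deep_adj H \<pi> g h \<longleftrightarrow> g \<noteq> h \<and>
     (\<forall>a \<in> carrier H. \<forall>b \<in> carrier H. \<pi> a = g \<longrightarrow> \<pi> b = h \<longrightarrow> a \<otimes>\<^bsub>H\<^esub> b = b \<otimes>\<^bsub>H\<^esub> a)"

definition dominant_vertices ::
  "('c, 'd) monoid_scheme \<Rightarrow> ('c \<Rightarrow> 'a) \<Rightarrow> ('a, 'b) monoid_scheme \<Rightarrow> 'a set" where
  "dominant_vertices H \<pi> G =
     {g \<in> carrier G. \<forall>h \<in> carrier G. h \<noteq> g \<longrightarrow> deep_adj H \<pi> g h}"

text \<open>The direct product C_{p^(r 0)} x ... x C_{p^(r (k-1))}, written additively
  (as a multiplicative monoid record): tuples indexed by i < k, zero outside.\<close>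
definition cyc_prod :: "nat \<Rightarrow> (nat \<Rightarrow> nat) \<Rightarrow> nat \<Rightarrow> (nat \<Rightarrow> nat) monoid" where
  "cyc_prod p r k =
    \<lparr> carrier = {f. (\<forall>i<k. f i < p ^ r i) \<and> (\<forall>i\<ge>k. f i = 0)},
      monoid.mult = (\<lambda>f g i. if i < k then (f i + g i) mod (p ^ r i) else 0),
      monoid.one = (\<lambda>i. 0) \<rparr>"

end

(* Let G = C_{p^r_0} x ... x C_{p^r_(k-1)} with r_0 >= r_1 >= ... and let pi : H -> G be a Schur
   cover. Its kernel is central, so since G is abelian the commutator [a, b] in H is bilinear and
   depends only on pi a and pi b. As the kernel lies in the derived subgroup, it is generated by
   the commutators c_ij of fixed lifts of the unit vectors e_i, e_j (i < j), and c_ij has order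
   dividing p^r_j. An explicit bilinear cocycle yields a stem extension whose kernel has
   prod_{i<j} p^r_j elements, so maximality of the Schur cover makes the words prod c_ij^(n_ij)
   pairwise distinct. A vertex g is dominant iff its lifts are central in H; expanding the
   commutators of a lift of g with the lifts of e_0 and e_1 in the c_ij shows that this happens
   iff g is a multiple of p^r_1 e_0. *)

theory Submission
  imports Defs "HOL-Algebra.Multiplicative_Group"
begin

section \<open>Commutators in central extensions\<close>

definition commutator :: "('a, 'b) monoid_scheme \<Rightarrow> 'a \<Rightarrow> 'a \<Rightarrow> 'a" where
  "commutator H a b = a \<otimes>\<^bsub>H\<^esub> b \<otimes>\<^bsub>H\<^esub> inv\<^bsub>H\<^esub> a \<otimes>\<^bsub>H\<^esub> inv\<^bsub>H\<^esub> b"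

context group
begin

lemma commutator_closed [simp]:
  "a \<in> carrier G \<Longrightarrow> b \<in> carrier G \<Longrightarrow> commutator G a b \<in> carrier G"
  by (simp add: commutator_def)

lemma mult_eq_commutator_mult:
  assumes "a \<in> carrier G" "b \<in> carrier G"
  shows "a \<otimes> b = commutator G a b \<otimes> (b \<otimes> a)"
proof -
  have "inv b \<otimes> (b \<otimes> a) = a" using assms by (simp add: m_assoc [symmetric])
  then show ?thesis using assms by (simp add: commutator_def m_assoc)
qed

lemma commutator_eqI:
  "\<lbrakk>a \<in> carrier G; b \<in> carrier G; z \<in> carrier G; a \<otimes> b = z \<otimes> (b \<otimes> a)\<rbrakk>
    \<Longrightarrow> commutator G a b = z"
  by (simp add: commutator_def m_assoc)

lemma commutator_eq_one_iff:
  "a \<in> carrier G \<Longrightarrow> b \<in> carrier G \<Longrightarrow> commutator G a b = \<one> \<longleftrightarrow> a \<otimes> b = b \<otimes> a"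
  using mult_eq_commutator_mult [of a b] commutator_eqI [of a b \<one>] by auto

lemma commutator_self: "a \<in> carrier G \<Longrightarrow> commutator G a a = \<one>"
  by (simp add: commutator_eq_one_iff)

lemma commutator_one_right [simp]: "a \<in> carrier G \<Longrightarrow> commutator G a \<one> = \<one>"
  by (simp add: commutator_eq_one_iff)

lemma inv_commutator:
  assumes "a \<in> carrier G" "b \<in> carrier G"
  shows "inv (commutator G a b) = commutator G b a"
proof (rule inv_equality)
  show "commutator G b a \<otimes> commutator G a b = \<one>"
    using assms by (simp add: commutator_def m_assoc [symmetric])
       (simp add: m_assoc)
qed (use assms in auto)

end

lemma commutator_in_derived_set:
  "a \<in> carrier H \<Longrightarrow> b \<in> carrier H \<Longrightarrow> commutator H a b \<in> derived_set H (carrier H)"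
  unfolding commutator_def by (intro UN_I [of a] UN_I [of b]) auto

lemma derived_set_eq_commutators:
  "derived_set H (carrier H) = {commutator H a b | a b. a \<in> carrier H \<and> b \<in> carrier H}"
  by (auto simp: commutator_def)

lemma (in group) nat_pow_mod_order:
  assumes "x \<in> carrier G" "x [^] m = \<one>"
  shows "x [^] (n::nat) = x [^] (n mod m)"
proof -
  have "x [^] n = (x [^] m) [^] (n div m) \<otimes> x [^] (n mod m)"
    using assms(1) by (simp add: nat_pow_pow nat_pow_mult)
  then show ?thesis
    using assms by simp
qed

primrec ordered_pow_prod :: "('c, 'd) monoid_scheme \<Rightarrow> (nat \<Rightarrow> 'c) \<Rightarrow> (nat \<Rightarrow> nat) \<Rightarrow> nat \<Rightarrow> 'c" where
  "ordered_pow_prod H l e 0 = \<one>\<^bsub>H\<^esub>"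
| "ordered_pow_prod H l e (Suc n) = ordered_pow_prod H l e n \<otimes>\<^bsub>H\<^esub> l n [^]\<^bsub>H\<^esub> e n"

locale central_extension =
  fixes H :: "('c, 'd) monoid_scheme" and G :: "('a, 'b) monoid_scheme" and \<pi> :: "'c \<Rightarrow> 'a"
  assumes group_hom: "group_hom H G \<pi>"
    and comm_group_target: "comm_group G"
    and kernel_central: "kernel H G \<pi> \<subseteq> grp_center H"
begin

sublocale H: group H
  using group_hom by (rule group_hom.axioms)
sublocale G: comm_group G
  by (rule comm_group_target)
sublocale hom: group_hom H G \<pi>
  by (rule group_hom)

abbreviation K where "K \<equiv> kernel H G \<pi>"

lemma kernel_iff: "z \<in> K \<longleftrightarrow> z \<in> carrier H \<and> \<pi> z = \<one>\<^bsub>G\<^esub>"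
  by (simp add: kernel_def)

lemma kernel_commute: "z \<in> K \<Longrightarrow> y \<in> carrier H \<Longrightarrow> z \<otimes>\<^bsub>H\<^esub> y = y \<otimes>\<^bsub>H\<^esub> z"
  using kernel_central by (auto simp: grp_center_def)

lemma commutator_in_kernel:
  assumes "a \<in> carrier H" "b \<in> carrier H"
  shows "commutator H a b \<in> K"
proof -
  have "\<pi> (commutator H a b) = commutator G (\<pi> a) (\<pi> b)"
    using assms by (simp add: commutator_def)
  also have "\<dots> = \<one>\<^bsub>G\<^esub>"
    using assms by (simp add: G.commutator_eq_one_iff G.m_comm)
  finally show ?thesis using assms by (simp add: kernel_iff)
qed

lemma commutator_mult_right:
  assumes a: "a \<in> carrier H" and b: "b \<in> carrier H" and d: "d \<in> carrier H"
  shows "commutator H a (b \<otimes>\<^bsub>H\<^esub> d) = commutator H a b \<otimes>\<^bsub>H\<^esub> commutator H a d"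
proof (rule H.commutator_eqI)
  have "a \<otimes>\<^bsub>H\<^esub> (b \<otimes>\<^bsub>H\<^esub> d) = commutator H a b \<otimes>\<^bsub>H\<^esub> (b \<otimes>\<^bsub>H\<^esub> (a \<otimes>\<^bsub>H\<^esub> d))"
    using assms by (simp add: H.mult_eq_commutator_mult [of a b] H.m_assoc [symmetric])
  also have "\<dots> = commutator H a b \<otimes>\<^bsub>H\<^esub> (b \<otimes>\<^bsub>H\<^esub> commutator H a d \<otimes>\<^bsub>H\<^esub> (d \<otimes>\<^bsub>H\<^esub> a))"
    using assms by (simp add: H.mult_eq_commutator_mult [of a d] H.m_assoc)
  also have "\<dots> = commutator H a b \<otimes>\<^bsub>H\<^esub> (commutator H a d \<otimes>\<^bsub>H\<^esub> b \<otimes>\<^bsub>H\<^esub> (d \<otimes>\<^bsub>H\<^esub> a))"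
    using kernel_commute [OF commutator_in_kernel [OF a d] b] by simp
  also have "\<dots> = (commutator H a b \<otimes>\<^bsub>H\<^esub> commutator H a d) \<otimes>\<^bsub>H\<^esub> ((b \<otimes>\<^bsub>H\<^esub> d) \<otimes>\<^bsub>H\<^esub> a)"
    using assms by (simp add: H.m_assoc)
  finally show "a \<otimes>\<^bsub>H\<^esub> (b \<otimes>\<^bsub>H\<^esub> d) =
      (commutator H a b \<otimes>\<^bsub>H\<^esub> commutator H a d) \<otimes>\<^bsub>H\<^esub> ((b \<otimes>\<^bsub>H\<^esub> d) \<otimes>\<^bsub>H\<^esub> a)" .
qed (use assms in auto)

lemma commutator_mult_left:
  assumes a: "a \<in> carrier H" and b: "b \<in> carrier H" and d: "d \<in> carrier H"
  shows "commutator H (a \<otimes>\<^bsub>H\<^esub> b) d = commutator H a d \<otimes>\<^bsub>H\<^esub> commutator H b d"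
proof -
  have "commutator H (a \<otimes>\<^bsub>H\<^esub> b) d = inv\<^bsub>H\<^esub> commutator H d (a \<otimes>\<^bsub>H\<^esub> b)"
    using assms by (simp add: H.inv_commutator)
  also have "\<dots> = inv\<^bsub>H\<^esub> commutator H d b \<otimes>\<^bsub>H\<^esub> inv\<^bsub>H\<^esub> commutator H d a"
    using assms by (simp add: commutator_mult_right H.inv_mult_group)
  also have "\<dots> = commutator H a d \<otimes>\<^bsub>H\<^esub> commutator H b d"
    using assms kernel_commute [OF commutator_in_kernel [OF a d], of "commutator H b d"]
    by (simp add: H.inv_commutator)
  finally show ?thesis .
qed

lemma commutator_kernel_right: "a \<in> carrier H \<Longrightarrow> z \<in> K \<Longrightarrow> commutator H a z = \<one>\<^bsub>H\<^esub>"
  using kernel_commute [of z a] by (simp add: kernel_iff H.commutator_eq_one_iff)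

lemma commutator_kernel_left: "a \<in> carrier H \<Longrightarrow> z \<in> K \<Longrightarrow> commutator H z a = \<one>\<^bsub>H\<^esub>"
  using kernel_commute [of z a] by (simp add: kernel_iff H.commutator_eq_one_iff)

lemma commutator_pow_right:
  "a \<in> carrier H \<Longrightarrow> b \<in> carrier H \<Longrightarrow>
    commutator H a (b [^]\<^bsub>H\<^esub> (n::nat)) = commutator H a b [^]\<^bsub>H\<^esub> n"
  by (induction n) (simp_all add: commutator_mult_right H.commutator_eq_one_iff)

lemma commutator_pow_left:
  "a \<in> carrier H \<Longrightarrow> b \<in> carrier H \<Longrightarrow>
    commutator H (a [^]\<^bsub>H\<^esub> (n::nat)) b = commutator H a b [^]\<^bsub>H\<^esub> n"
  by (induction n) (simp_all add: commutator_mult_left H.commutator_eq_one_iff)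

lemma commutator_cong:
  assumes "a \<in> carrier H" "a' \<in> carrier H" "\<pi> a = \<pi> a'"
    and "b \<in> carrier H" "b' \<in> carrier H" "\<pi> b = \<pi> b'"
  shows "commutator H a' b' = commutator H a b"
proof -
  have "a' = a \<otimes>\<^bsub>H\<^esub> (inv\<^bsub>H\<^esub> a \<otimes>\<^bsub>H\<^esub> a')" "inv\<^bsub>H\<^esub> a \<otimes>\<^bsub>H\<^esub> a' \<in> K"
    and "b' = b \<otimes>\<^bsub>H\<^esub> (inv\<^bsub>H\<^esub> b \<otimes>\<^bsub>H\<^esub> b')" "inv\<^bsub>H\<^esub> b \<otimes>\<^bsub>H\<^esub> b' \<in> K"
    using assms by (auto simp: kernel_iff H.m_assoc [symmetric])
  then show ?thesis
    using assms by (metis H.inv_closed H.m_closed H.r_one commutator_kernel_left commutator_kernel_right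
        commutator_mult_left commutator_mult_right H.commutator_closed)
qed

end

section \<open>A stem extension of a product of cyclic groups\<close>

(* schur_cover only compares with stem extensions carried by nat. *)
lemma stem_extension_nat_copy:
  fixes A :: "('x, 'm) monoid_scheme" and \<pi> :: "'x \<Rightarrow> 'a" and G :: "('a, 'b) monoid_scheme"
  assumes stem: "stem_extension A \<pi> G" and fin: "finite (carrier A)"
  shows "\<exists>(B :: nat monoid) \<pi>'. stem_extension B \<pi>' G \<and> card (kernel B G \<pi>') = card (kernel A G \<pi>)"
proof -
  interpret A: group A using stem by (simp add: stem_extension_def)
  obtain f :: "'x \<Rightarrow> nat" where inj: "inj_on f (carrier A)"
    using finite_imp_inj_to_nat_seg [OF fin] by blast
  define g where "g = inv_into (carrier A) f"
  have g_f [simp]: "x \<in> carrier A \<Longrightarrow> g (f x) = x" for x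
    using inj by (simp add: g_def)
  define B :: "nat monoid" where
    "B = \<lparr>carrier = f ` carrier A, monoid.mult = (\<lambda>x y. f (g x \<otimes>\<^bsub>A\<^esub> g y)), one = f \<one>\<^bsub>A\<^esub>\<rparr>"
  have "f \<in> iso A B"
    using inj by (auto simp: iso_def hom_def bij_betw_def B_def)
  then have "A \<cong> B"
    by (auto simp: is_iso_def)
  moreover have "monoid B"
    by (unfold_locales) (auto simp: B_def A.m_assoc)
  ultimately have group_B: "group B"
    by (rule A.iso_imp_group)
  have hom_f: "group_hom A B f"
    using group_B \<open>f \<in> iso A B\<close> by (auto simp: group_hom_def group_hom_axioms_def iso_def)
  have kernel_B: "kernel B G (\<pi> \<circ> g) = f ` kernel A G \<pi>"
    by (auto simp: kernel_def B_def)
  have "f ` grp_center A \<subseteq> grp_center B"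
    by (auto simp: grp_center_def B_def)
  moreover have "derived B (carrier B) = f ` derived A (carrier A)"
    using group_hom.derived_img [OF hom_f, of "carrier A"] by (simp add: B_def)
  ultimately have "kernel B G (\<pi> \<circ> g) \<subseteq> grp_center B \<inter> derived B (carrier B)"
    using stem unfolding kernel_B stem_extension_def by blast
  then have "stem_extension B (\<pi> \<circ> g) G"
    using stem group_B by (auto simp: stem_extension_def hom_def B_def image_comp)
  moreover have "card (kernel B G (\<pi> \<circ> g)) = card (kernel A G \<pi>)"
    unfolding kernel_B by (rule card_image) (auto intro: inj_on_subset [OF inj] simp: kernel_def)
  ultimately show ?thesis
    by blast
qed

lemma cyc_prod_carrier_iff:
  "f \<in> carrier (cyc_prod p r k) \<longleftrightarrow> (\<forall>i<k. f i < p ^ r i) \<and> (\<forall>i\<ge>k. f i = 0)"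
  by (simp add: cyc_prod_def)

lemma cyc_prod_mult:
  "f \<otimes>\<^bsub>cyc_prod p r k\<^esub> g = (\<lambda>i. if i < k then (f i + g i) mod p ^ r i else 0)"
  by (simp add: cyc_prod_def)

lemma cyc_prod_one: "\<one>\<^bsub>cyc_prod p r k\<^esub> = (\<lambda>i. 0)"
  by (simp add: cyc_prod_def)

lemma cyc_prod_mult_commute: "f \<otimes>\<^bsub>cyc_prod p r k\<^esub> g = g \<otimes>\<^bsub>cyc_prod p r k\<^esub> f"
  by (rule ext) (simp add: cyc_prod_mult add.commute)

lemma cyc_prod_pow:
  "f [^]\<^bsub>cyc_prod p r k\<^esub> (n::nat) = (\<lambda>i. if i < k then n * f i mod p ^ r i else 0)"
proof (induction n)
  case (Suc n)
  then show ?case by (intro ext) (simp add: cyc_prod_mult mod_add_left_eq mod_add_right_eq add.commute)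
qed (simp add: cyc_prod_one fun_eq_iff)

lemma cyc_prod_comm_group:
  assumes "0 < p"
  shows "comm_group (cyc_prod p r k)"
proof (rule group.group_comm_groupI)
  show "group (cyc_prod p r k)"
  proof (rule groupI)
    fix f assume f: "f \<in> carrier (cyc_prod p r k)"
    define g where "g = (\<lambda>i. if i < k then (p ^ r i - f i) mod p ^ r i else 0)"
    have "g \<in> carrier (cyc_prod p r k)"
      using assms by (simp add: g_def cyc_prod_carrier_iff)
    moreover have "g \<otimes>\<^bsub>cyc_prod p r k\<^esub> f = \<one>\<^bsub>cyc_prod p r k\<^esub>"
      using f by (auto simp: g_def cyc_prod_mult cyc_prod_one cyc_prod_carrier_iff mod_add_left_eq fun_eq_iff)
    ultimately show "\<exists>g \<in> carrier (cyc_prod p r k). g \<otimes>\<^bsub>cyc_prod p r k\<^esub> f = \<one>\<^bsub>cyc_prod p r k\<^esub>"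
      by blast
  qed (use assms in \<open>auto simp: cyc_prod_carrier_iff cyc_prod_mult cyc_prod_one mod_add_left_eq
         mod_add_right_eq add.assoc\<close>)
qed (rule cyc_prod_mult_commute)

lemma finite_cyc_prod_carrier: "finite (carrier (cyc_prod p r k))"
proof (rule finite_subset)
  show "carrier (cyc_prod p r k) \<subseteq> (\<lambda>f i. if i < k then f i else 0) ` (\<Pi>\<^sub>E i\<in>{..<k}. {..<p ^ r i})"
  proof
    fix f assume f: "f \<in> carrier (cyc_prod p r k)"
    then have "f = (\<lambda>i. if i < k then restrict f {..<k} i else 0)"
      by (auto simp: cyc_prod_carrier_iff)
    moreover have "restrict f {..<k} \<in> (\<Pi>\<^sub>E i\<in>{..<k}. {..<p ^ r i})"
      using f by (auto simp: cyc_prod_carrier_iff)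
    ultimately show "f \<in> (\<lambda>f i. if i < k then f i else 0) ` (\<Pi>\<^sub>E i\<in>{..<k}. {..<p ^ r i})"
      by blast
  qed
qed (intro finite_imageI finite_PiE; simp)

definition cyc_unit :: "nat \<Rightarrow> nat \<Rightarrow> nat" where
  "cyc_unit j = (\<lambda>i. if i = j then 1 else 0)"

lemma cyc_unit_carrier:
  "1 < p \<Longrightarrow> 0 < r j \<Longrightarrow> j < k \<Longrightarrow> cyc_unit j \<in> carrier (cyc_prod p r k)"
  using one_less_power [of p "r j"] by (auto simp: cyc_prod_carrier_iff cyc_unit_def)

lemma cyc_unit_pow:
  "j < k \<Longrightarrow> cyc_unit j [^]\<^bsub>cyc_prod p r k\<^esub> (n::nat) = (\<lambda>i. if i = j then n mod p ^ r j else 0)"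
  by (auto simp: cyc_prod_pow cyc_unit_def)

lemma add_diff_mod_self: "(m + a - a mod m) mod m = (0::nat)"
proof -
  have "m + a - a mod m = m + m * (a div m)"
    by (simp add: minus_mod_eq_mult_div [symmetric])
  then show ?thesis
    by simp
qed

definition upper_pairs :: "nat \<Rightarrow> (nat \<times> nat) set" where
  "upper_pairs k = {(i, j). i < j \<and> j < k}"

definition pair_coeffs :: "nat \<Rightarrow> (nat \<Rightarrow> nat) \<Rightarrow> nat \<Rightarrow> (nat \<times> nat \<Rightarrow> nat) set" where
  "pair_coeffs p r k = (\<Pi>\<^sub>E x\<in>upper_pairs k. {..<p ^ r (snd x)})"

lemma finite_upper_pairs: "finite (upper_pairs k)"
  by (rule finite_subset [of _ "{..<k} \<times> {..<k}"]) (auto simp: upper_pairs_def)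

lemma finite_pair_coeffs: "finite (pair_coeffs p r k)"
  by (simp add: pair_coeffs_def finite_PiE finite_upper_pairs)

(* The bilinear cocycle (g, h) |-> (g_i h_j)_{i<j}, with values in the product of the C_{p^(r j)}
   over i < j. It is well defined although g_i is only determined modulo p^(r i), because
   p^(r j) divides p^(r i). *)
definition cocycle_ext ::
  "nat \<Rightarrow> (nat \<Rightarrow> nat) \<Rightarrow> nat \<Rightarrow> ((nat \<Rightarrow> nat) \<times> (nat \<times> nat \<Rightarrow> nat)) monoid" where
  "cocycle_ext p r k =
    \<lparr>carrier = carrier (cyc_prod p r k) \<times> pair_coeffs p r k,
     monoid.mult = (\<lambda>(g, c) (h, d). (g \<otimes>\<^bsub>cyc_prod p r k\<^esub> h,
        \<lambda>x\<in>upper_pairs k. (c x + d x + g (fst x) * h (snd x)) mod p ^ r (snd x))),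
     one = (\<one>\<^bsub>cyc_prod p r k\<^esub>, \<lambda>x\<in>upper_pairs k. 0)\<rparr>"

locale cyc_exponents =
  fixes p :: nat and r :: "nat \<Rightarrow> nat" and k :: nat
  assumes base_gt_1: "1 < p"
    and exponent_pos: "\<And>i. i < k \<Longrightarrow> 0 < r i"
    and exponent_antimono: "\<And>i j. i \<le> j \<Longrightarrow> j < k \<Longrightarrow> r j \<le> r i"
begin

abbreviation G where "G \<equiv> cyc_prod p r k"
abbreviation E where "E \<equiv> cocycle_ext p r k"

lemma base_pos [simp]: "0 < p"
  using base_gt_1 by simp

lemma modulus_dvd: "i \<le> j \<Longrightarrow> j < k \<Longrightarrow> p ^ r j dvd p ^ r i"
  using exponent_antimono by (simp add: le_imp_power_dvd)

lemma mod_fst_mult_mod_snd: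
  "x \<in> upper_pairs k \<Longrightarrow> (a mod p ^ r (fst x)) * b mod p ^ r (snd x) = a * b mod p ^ r (snd x)"
proof -
  assume "x \<in> upper_pairs k"
  then have "p ^ r (snd x) dvd p ^ r (fst x)"
    by (auto simp: upper_pairs_def modulus_dvd)
  then show ?thesis
    by (metis mod_mult_left_eq mod_mod_cancel)
qed

sublocale G: comm_group G
  using cyc_prod_comm_group base_gt_1 by simp

lemma cyc_unit_in_carrier [simp]: "j < k \<Longrightarrow> cyc_unit j \<in> carrier G"
  using base_gt_1 exponent_pos by (simp add: cyc_unit_carrier)

lemma restrict_mod_in_pair_coeffs:
  "(\<lambda>x\<in>upper_pairs k. f x mod p ^ r (snd x)) \<in> pair_coeffs p r k"
  by (auto simp: pair_coeffs_def intro: mod_less_divisor)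

definition single_coeff :: "nat \<times> nat \<Rightarrow> nat \<Rightarrow> nat \<times> nat \<Rightarrow> nat" where
  "single_coeff y s = (\<lambda>x\<in>upper_pairs k. if x = y then s mod p ^ r (snd x) else 0)"

lemma zero_in_pair_coeffs: "(\<lambda>x\<in>upper_pairs k. 0) \<in> pair_coeffs p r k"
  by (auto simp: pair_coeffs_def)

lemma single_coeff_in_pair_coeffs: "single_coeff y s \<in> pair_coeffs p r k"
  by (auto simp: single_coeff_def pair_coeffs_def)

definition first_row_coeffs :: "(nat \<Rightarrow> nat) \<Rightarrow> nat \<Rightarrow> nat \<times> nat \<Rightarrow> nat" where
  "first_row_coeffs g n =
    (\<lambda>x\<in>upper_pairs k. if fst x = 0 \<and> snd x < n then g (snd x) mod p ^ r (snd x) else 0)"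

lemma first_row_coeffs_Suc:
  "first_row_coeffs g (Suc n) =
    (\<lambda>x\<in>upper_pairs k. (first_row_coeffs g n x + single_coeff (0, n) (g n) x) mod p ^ r (snd x))"
  unfolding first_row_coeffs_def single_coeff_def by (intro restrict_ext) (auto simp: less_Suc_eq)

lemma cocycle_ext_carrier: "(g, c) \<in> carrier E \<longleftrightarrow> g \<in> carrier G \<and> c \<in> pair_coeffs p r k"
  by (simp add: cocycle_ext_def)

lemma cocycle_ext_mult:
  "(g, c) \<otimes>\<^bsub>E\<^esub> (h, d) = (g \<otimes>\<^bsub>G\<^esub> h,
     \<lambda>x\<in>upper_pairs k. (c x + d x + g (fst x) * h (snd x)) mod p ^ r (snd x))"
  by (simp add: cocycle_ext_def)

lemma cocycle_ext_one: "\<one>\<^bsub>E\<^esub> = (\<one>\<^bsub>G\<^esub>, \<lambda>x\<in>upper_pairs k. 0)"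
  by (simp add: cocycle_ext_def)

lemma cocycle_ext_assoc:
  assumes "g \<in> carrier G" "h \<in> carrier G" "l \<in> carrier G"
  shows "(g, c) \<otimes>\<^bsub>E\<^esub> (h, d) \<otimes>\<^bsub>E\<^esub> (l, e) = (g, c) \<otimes>\<^bsub>E\<^esub> ((h, d) \<otimes>\<^bsub>E\<^esub> (l, e))"
proof -
  have "((c x + d x + g i * h j) mod m + e x + (g \<otimes>\<^bsub>G\<^esub> h) i * l j) mod m =
        (c x + (d x + e x + h i * l j) mod m + g i * (h \<otimes>\<^bsub>G\<^esub> l) j) mod m"
    if x: "x = (i, j)" "x \<in> upper_pairs k" and m: "m = p ^ r j" for x i j m
  proof -
    have "(g \<otimes>\<^bsub>G\<^esub> h) i * l j mod m = (g i + h i) * l j mod m"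
      using mod_fst_mult_mod_snd [OF x(2)] x by (simp add: cyc_prod_mult m upper_pairs_def)
    then have "((c x + d x + g i * h j) mod m + e x + (g \<otimes>\<^bsub>G\<^esub> h) i * l j) mod m =
        (c x + d x + g i * h j + e x + (g i + h i) * l j) mod m"
      by (intro mod_add_cong) (simp_all add: mod_simps)
    also have "\<dots> = (c x + (d x + e x + h i * l j) + g i * (h j + l j)) mod m"
      by (simp add: algebra_simps)
    also have "\<dots> = (c x + (d x + e x + h i * l j) mod m + g i * (h \<otimes>\<^bsub>G\<^esub> l) j) mod m"
      using x by (intro mod_add_cong) (simp_all add: mod_simps cyc_prod_mult m upper_pairs_def)
    finally show ?thesis .
  qed
  then show ?thesis
    using assms by (auto simp: cocycle_ext_mult G.m_assoc intro!: restrict_ext)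
qed

lemma cocycle_ext_group: "group E"
proof (rule groupI)
  fix a b assume "a \<in> carrier E" "b \<in> carrier E"
  then show "a \<otimes>\<^bsub>E\<^esub> b \<in> carrier E"
    by (cases a, cases b) (simp add: cocycle_ext_carrier cocycle_ext_mult restrict_mod_in_pair_coeffs)
next
  show "\<one>\<^bsub>E\<^esub> \<in> carrier E"
    by (auto simp: cocycle_ext_one cocycle_ext_carrier pair_coeffs_def)
next
  fix a b c assume "a \<in> carrier E" "b \<in> carrier E" "c \<in> carrier E"
  then show "a \<otimes>\<^bsub>E\<^esub> b \<otimes>\<^bsub>E\<^esub> c = a \<otimes>\<^bsub>E\<^esub> (b \<otimes>\<^bsub>E\<^esub> c)"
    by (cases a, cases b, cases c) (simp add: cocycle_ext_carrier cocycle_ext_assoc)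
next
  fix a assume "a \<in> carrier E"
  then obtain g c where a: "a = (g, c)" "g \<in> carrier G" "c \<in> pair_coeffs p r k"
    by (cases a) (auto simp: cocycle_ext_carrier)
  have "c x < p ^ r (snd x)" if "x \<in> upper_pairs k" for x
    using a that by (auto simp: pair_coeffs_def)
  then show "\<one>\<^bsub>E\<^esub> \<otimes>\<^bsub>E\<^esub> a = a"
    using a(2,3) unfolding a(1) cocycle_ext_one cocycle_ext_mult prod.inject
    by (intro conjI) (simp, auto simp: cyc_prod_one pair_coeffs_def PiE_def extensional_def intro!: ext)
  define c' where
    "c' = (\<lambda>x\<in>upper_pairs k. (p ^ r (snd x) - (c x + (inv\<^bsub>G\<^esub> g) (fst x) * g (snd x)) mod p ^ r (snd x))
                               mod p ^ r (snd x))"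
  have "(inv\<^bsub>G\<^esub> g, c') \<otimes>\<^bsub>E\<^esub> a = \<one>\<^bsub>E\<^esub>"
    using a by (auto simp: cocycle_ext_mult cocycle_ext_one c'_def mod_add_left_eq add.assoc
        add_diff_mod_self intro!: restrict_ext)
  moreover have "(inv\<^bsub>G\<^esub> g, c') \<in> carrier E"
    using a by (simp add: cocycle_ext_carrier c'_def restrict_mod_in_pair_coeffs)
  ultimately show "\<exists>b\<in>carrier E. b \<otimes>\<^bsub>E\<^esub> a = \<one>\<^bsub>E\<^esub>"
    by blast
qed

lemma cocycle_ext_fst_hom: "fst \<in> hom E G"
  by (auto simp: hom_def cocycle_ext_def split_beta)

lemma kernel_cocycle_ext: "kernel E G fst = {\<one>\<^bsub>G\<^esub>} \<times> pair_coeffs p r k"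
  by (auto simp: kernel_def cocycle_ext_def)

lemma kernel_cocycle_ext_central: "kernel E G fst \<subseteq> grp_center E"
proof
  fix z assume "z \<in> kernel E G fst"
  then obtain c where z: "z = (\<one>\<^bsub>G\<^esub>, c)" "c \<in> pair_coeffs p r k"
    by (auto simp: kernel_cocycle_ext)
  have "z \<otimes>\<^bsub>E\<^esub> (h, d) = (h, d) \<otimes>\<^bsub>E\<^esub> z" if "h \<in> carrier G" for h d
    using that G.m_comm [OF G.one_closed that]
    by (auto simp: z cocycle_ext_mult cyc_prod_one add.commute intro!: restrict_ext)
  then show "z \<in> grp_center E"
    using z by (auto simp: grp_center_def cocycle_ext_carrier)
qed

lemma commutator_cocycle_ext_units:
  assumes ij: "(i, j) \<in> upper_pairs k"
  shows "commutator E (cyc_unit i, \<lambda>x\<in>upper_pairs k. 0) (cyc_unit j, \<lambda>x\<in>upper_pairs k. 0) =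
    (\<one>\<^bsub>G\<^esub>, single_coeff (i, j) 1)"
proof (rule group.commutator_eqI [OF cocycle_ext_group])
  have i: "i < k" and j: "j < k"
    using ij by (auto simp: upper_pairs_def)
  show "(cyc_unit i, \<lambda>x\<in>upper_pairs k. 0) \<otimes>\<^bsub>E\<^esub> (cyc_unit j, \<lambda>x\<in>upper_pairs k. 0) =
      (\<one>\<^bsub>G\<^esub>, single_coeff (i, j) 1) \<otimes>\<^bsub>E\<^esub>
        ((cyc_unit j, \<lambda>x\<in>upper_pairs k. 0) \<otimes>\<^bsub>E\<^esub> (cyc_unit i, \<lambda>x\<in>upper_pairs k. 0))"
    unfolding cocycle_ext_mult prod.inject
  proof
    show "cyc_unit i \<otimes>\<^bsub>G\<^esub> cyc_unit j = \<one>\<^bsub>G\<^esub> \<otimes>\<^bsub>G\<^esub> (cyc_unit j \<otimes>\<^bsub>G\<^esub> cyc_unit i)"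
      using i j by (simp add: G.m_comm [of "cyc_unit i"])
  qed (use ij in \<open>auto simp: cyc_prod_one single_coeff_def cyc_unit_def upper_pairs_def
      intro!: restrict_ext\<close>)
qed (use ij [unfolded upper_pairs_def] in \<open>auto simp: cocycle_ext_carrier single_coeff_in_pair_coeffs zero_in_pair_coeffs\<close>)

lemma single_coeff_in_derived:
  assumes "x \<in> upper_pairs k"
  shows "(\<one>\<^bsub>G\<^esub>, single_coeff x 1) \<in> derived E (carrier E)"
proof -
  obtain i j where ij: "x = (i, j)" "(i, j) \<in> upper_pairs k"
    using assms by (cases x) simp
  have "(cyc_unit l, \<lambda>x\<in>upper_pairs k. 0) \<in> carrier E" if "l < k" for l
    using that by (simp add: cocycle_ext_carrier zero_in_pair_coeffs)
  then have "commutator E (cyc_unit i, \<lambda>x\<in>upper_pairs k. 0) (cyc_unit j, \<lambda>x\<in>upper_pairs k. 0)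
      \<in> derived_set E (carrier E)"
    using ij by (intro commutator_in_derived_set) (auto simp: upper_pairs_def)
  then show ?thesis
    unfolding derived_def ij(1) commutator_cocycle_ext_units [OF ij(2)] by (rule generate.incl)
qed

lemma cocycle_ext_kernel_decrement:
  assumes c: "c \<in> pair_coeffs p r k" and x: "x \<in> upper_pairs k" "c x \<noteq> 0"
  shows "c(x := c x - 1) \<in> pair_coeffs p r k"
    and "(\<one>\<^bsub>G\<^esub>, c(x := c x - 1)) \<otimes>\<^bsub>E\<^esub> (\<one>\<^bsub>G\<^esub>, single_coeff x 1) = (\<one>\<^bsub>G\<^esub>, c)"
proof -
  have bound: "c y < p ^ r (snd y)" if "y \<in> upper_pairs k" for y
    using PiE_mem [OF c [unfolded pair_coeffs_def] that] by simp
  show "c(x := c x - 1) \<in> pair_coeffs p r k"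
    using PiE_fun_upd [OF _ c [unfolded pair_coeffs_def], of "c x - 1" x] x bound [of x]
    by (simp add: pair_coeffs_def insert_absorb)
  have "(\<lambda>y\<in>upper_pairs k. ((c(x := c x - 1)) y + single_coeff x 1 y + \<one>\<^bsub>G\<^esub> (fst y) * \<one>\<^bsub>G\<^esub> (snd y))
      mod p ^ r (snd y)) y = c y" for y
  proof (cases "y \<in> upper_pairs k")
    case True
    show ?thesis
    proof (cases "y = x")
      case True
      then show ?thesis
        using x bound [OF x(1)] base_gt_1 exponent_pos [of "snd x"]
        by (auto simp: single_coeff_def cyc_prod_one upper_pairs_def)
    next
      case False
      then show ?thesis
        using \<open>y \<in> upper_pairs k\<close> bound [of y] by (simp add: single_coeff_def cyc_prod_one)
    qed
  next
    case False
    then show ?thesis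
      using PiE_arb [OF c [unfolded pair_coeffs_def] False] by simp
  qed
  then show "(\<one>\<^bsub>G\<^esub>, c(x := c x - 1)) \<otimes>\<^bsub>E\<^esub> (\<one>\<^bsub>G\<^esub>, single_coeff x 1) = (\<one>\<^bsub>G\<^esub>, c)"
    by (simp add: cocycle_ext_mult fun_eq_iff)
qed

lemma kernel_cocycle_ext_derived: "kernel E G fst \<subseteq> derived E (carrier E)"
proof -
  have "(\<one>\<^bsub>G\<^esub>, c) \<in> derived E (carrier E)" if "c \<in> pair_coeffs p r k" for c
    using that
  proof (induction "sum c (upper_pairs k)" arbitrary: c rule: less_induct)
    case less
    show ?case
    proof (cases "\<exists>x\<in>upper_pairs k. c x \<noteq> 0")
      case False
      then have "(\<one>\<^bsub>G\<^esub>, c) = \<one>\<^bsub>E\<^esub>"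
        using less.prems by (auto simp: cocycle_ext_one pair_coeffs_def PiE_def extensional_def)
      then show ?thesis
        by (simp add: derived_def generate.one)
    next
      case True
      then obtain x where x: "x \<in> upper_pairs k" "c x \<noteq> 0"
        by blast
      have "sum (c(x := c x - 1)) (upper_pairs k) < sum c (upper_pairs k)"
        using x by (intro sum_strict_mono_ex1) (auto simp: finite_upper_pairs)
      then have "(\<one>\<^bsub>G\<^esub>, c(x := c x - 1)) \<in> derived E (carrier E)"
        using less.hyps cocycle_ext_kernel_decrement(1) [OF less.prems x] by blast
      moreover have "(\<one>\<^bsub>G\<^esub>, single_coeff x 1) \<in> derived E (carrier E)"
        using x(1) by (rule single_coeff_in_derived)
      ultimately show ?thesis
        unfolding derived_def cocycle_ext_kernel_decrement(2) [OF less.prems x, symmetric]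
        by (rule generate.eng)
    qed
  qed
  then show ?thesis
    by (auto simp: kernel_cocycle_ext)
qed

lemma cocycle_ext_fst_surj: "fst ` carrier E = carrier G"
  using zero_in_pair_coeffs by (force simp: cocycle_ext_def)

lemma cocycle_ext_stem_extension: "stem_extension E fst G"
  unfolding stem_extension_def
  using cocycle_ext_group cocycle_ext_fst_hom cocycle_ext_fst_surj kernel_cocycle_ext_central
    kernel_cocycle_ext_derived G.is_group
  by blast

lemma schur_cover_card_kernel_ge:
  assumes "schur_cover H \<pi> G"
  shows "card (pair_coeffs p r k) \<le> card (kernel H G \<pi>)"
proof -
  have "finite (carrier E)"
    by (simp add: cocycle_ext_def finite_cyc_prod_carrier finite_pair_coeffs)
  then obtain B :: "nat monoid" and \<pi>' where "stem_extension B \<pi>' G"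
    and "card (kernel B G \<pi>') = card (kernel E G fst)"
    using stem_extension_nat_copy [OF cocycle_ext_stem_extension] by blast
  moreover have "card (kernel E G fst) = card (pair_coeffs p r k)"
    by (simp add: kernel_cocycle_ext card_cartesian_product_singleton)
  ultimately show ?thesis
    using assms by (metis schur_cover_def)
qed

end

section \<open>The kernel of a Schur cover\<close>

locale cyc_schur_cover = cyc_exponents p r k for p r k +
  fixes H :: "('c, 'd) monoid_scheme" and \<pi> :: "'c \<Rightarrow> nat \<Rightarrow> nat"
  assumes schur_cover: "schur_cover H \<pi> (cyc_prod p r k)"
begin

lemma stem: "stem_extension H \<pi> G"
  using schur_cover by (simp add: schur_cover_def)

sublocale central_extension H G \<pi>
  using stem G.comm_group_axioms
  by (auto simp: stem_extension_def central_extension_def group_hom_def group_hom_axioms_def)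

definition lift :: "nat \<Rightarrow> 'c" where
  "lift j = (SOME a. a \<in> carrier H \<and> \<pi> a = cyc_unit j)"

lemma surj_proj: "\<pi> ` carrier H = carrier G"
  using stem unfolding stem_extension_def by (elim conjE)

lemma lift: "j < k \<Longrightarrow> lift j \<in> carrier H \<and> \<pi> (lift j) = cyc_unit j"
proof -
  assume "j < k"
  then have "cyc_unit j \<in> \<pi> ` carrier H"
    by (simp add: surj_proj)
  then obtain a where "a \<in> carrier H \<and> \<pi> a = cyc_unit j"
    by (auto simp: image_iff)
  then show ?thesis
    unfolding lift_def by (rule someI)
qed

lemma lift_in_carrier [simp]: "j < k \<Longrightarrow> lift j \<in> carrier H"
  and \<pi>_lift [simp]: "j < k \<Longrightarrow> \<pi> (lift j) = cyc_unit j"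
  using lift by blast+

abbreviation lift_word :: "(nat \<Rightarrow> nat) \<Rightarrow> nat \<Rightarrow> 'c" where
  "lift_word \<equiv> ordered_pow_prod H lift"

lemma lift_word_in_carrier [simp]: "n \<le> k \<Longrightarrow> lift_word g n \<in> carrier H"
  by (induction n) auto

lemma \<pi>_lift_word: "n \<le> k \<Longrightarrow> \<pi> (lift_word g n) = (\<lambda>i. if i < n then g i mod p ^ r i else 0)"
proof (induction n)
  case (Suc n)
  then show ?case
    by (auto simp: hom.hom_nat_pow cyc_unit_pow cyc_prod_mult fun_eq_iff)
qed (simp add: cyc_prod_one)

lemma \<pi>_lift_word_self: "g \<in> carrier G \<Longrightarrow> \<pi> (lift_word g k) = g"
  by (auto simp: \<pi>_lift_word cyc_prod_carrier_iff fun_eq_iff)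

lemma carrier_induct:
  assumes b: "b \<in> carrier H"
    and mult: "\<And>x y. x \<in> carrier H \<Longrightarrow> y \<in> carrier H \<Longrightarrow> Q x \<Longrightarrow> Q y \<Longrightarrow> Q (x \<otimes>\<^bsub>H\<^esub> y)"
    and kernel: "\<And>z. z \<in> K \<Longrightarrow> Q z"
    and lift: "\<And>j. j < k \<Longrightarrow> Q (lift j)"
  shows "Q b"
proof -
  have one: "Q \<one>\<^bsub>H\<^esub>"
    using kernel by (simp add: kernel_iff)
  have "Q (lift j [^]\<^bsub>H\<^esub> (m::nat))" if "j < k" for j m
    using that by (induction m) (auto simp: one mult lift)
  then have word: "Q (lift_word g n)" if "n \<le> k" for g n
    using that by (induction n) (auto simp: one mult)
  define z where "z = inv\<^bsub>H\<^esub> lift_word (\<pi> b) k \<otimes>\<^bsub>H\<^esub> b"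
  have "z \<in> K"
    using b by (simp add: z_def kernel_iff \<pi>_lift_word_self)
  then have "Q (lift_word (\<pi> b) k \<otimes>\<^bsub>H\<^esub> z)"
    by (intro mult word kernel) (simp_all add: kernel_iff)
  moreover have "lift_word (\<pi> b) k \<otimes>\<^bsub>H\<^esub> z = b"
    using b by (simp add: z_def H.m_assoc [symmetric])
  ultimately show ?thesis
    by simp
qed

definition lift_commutator :: "nat \<times> nat \<Rightarrow> 'c" where
  "lift_commutator x = commutator H (lift (fst x)) (lift (snd x))"

lemma lift_commutator_in_kernel: "x \<in> upper_pairs k \<Longrightarrow> lift_commutator x \<in> K"
  by (auto simp: lift_commutator_def upper_pairs_def intro: commutator_in_kernel)

lemma lift_commutator_in_carrier [simp]: "x \<in> upper_pairs k \<Longrightarrow> lift_commutator x \<in> carrier H"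
  using lift_commutator_in_kernel by (simp add: kernel_iff)

lemma lift_commutator_pow_mod:
  assumes x: "x \<in> upper_pairs k"
  shows "lift_commutator x [^]\<^bsub>H\<^esub> (n::nat) = lift_commutator x [^]\<^bsub>H\<^esub> (n mod p ^ r (snd x))"
proof (rule H.nat_pow_mod_order)
  have "snd x < k" "fst x < k"
    using x by (auto simp: upper_pairs_def)
  then have "lift (snd x) [^]\<^bsub>H\<^esub> (p ^ r (snd x)) \<in> K"
    by (simp add: kernel_iff hom.hom_nat_pow cyc_unit_pow cyc_prod_one fun_eq_iff)
  then show "lift_commutator x [^]\<^bsub>H\<^esub> (p ^ r (snd x)) = \<one>\<^bsub>H\<^esub>"
    using \<open>snd x < k\<close> \<open>fst x < k\<close>
    by (simp add: lift_commutator_def commutator_pow_right [symmetric] commutator_kernel_right)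
qed (use x in simp)

abbreviation kernel_group where "kernel_group \<equiv> H\<lparr>carrier := K\<rparr>"

sublocale kernel_group: comm_group kernel_group
proof -
  interpret kernel_group: group kernel_group
    using H.subgroup_imp_group [OF hom.subgroup_kernel] .
  show "comm_group kernel_group"
    by (rule kernel_group.group_comm_groupI) (auto simp: kernel_commute kernel_iff)
qed

definition commutator_word :: "(nat \<times> nat \<Rightarrow> nat) \<Rightarrow> 'c" where
  "commutator_word n = finprod kernel_group (\<lambda>x. lift_commutator x [^]\<^bsub>H\<^esub> n x) (upper_pairs k)"

lemma lift_commutator_pow_in_kernel: "x \<in> upper_pairs k \<Longrightarrow> lift_commutator x [^]\<^bsub>H\<^esub> (m::nat) \<in> K"
  using lift_commutator_in_kernel [of x] by (simp add: kernel_iff hom.hom_nat_pow)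

lemma lift_commutator_pow_Pi:
  "(\<lambda>x. lift_commutator x [^]\<^bsub>H\<^esub> (n x :: nat)) \<in> upper_pairs k \<rightarrow> carrier kernel_group"
  using lift_commutator_pow_in_kernel by simp

lemma commutator_word_in_kernel: "commutator_word n \<in> K"
  using kernel_group.finprod_closed [OF lift_commutator_pow_Pi] by (simp add: commutator_word_def)

lemma commutator_word_mult:
  "commutator_word n \<otimes>\<^bsub>H\<^esub> commutator_word m =
    commutator_word (\<lambda>x\<in>upper_pairs k. (n x + m x) mod p ^ r (snd x))"
proof -
  have "commutator_word n \<otimes>\<^bsub>H\<^esub> commutator_word m =
      finprod kernel_group (\<lambda>x. lift_commutator x [^]\<^bsub>H\<^esub> n x \<otimes>\<^bsub>H\<^esub> lift_commutator x [^]\<^bsub>H\<^esub> m x)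
        (upper_pairs k)"
    using kernel_group.finprod_multf [OF lift_commutator_pow_Pi [of n] lift_commutator_pow_Pi [of m]]
    by (simp add: commutator_word_def)
  also have "\<dots> = commutator_word (\<lambda>x\<in>upper_pairs k. (n x + m x) mod p ^ r (snd x))"
    unfolding commutator_word_def
    by (intro kernel_group.finprod_cong')
      (auto simp: lift_commutator_pow_in_kernel H.nat_pow_mult lift_commutator_pow_mod [of _ "n _ + m _"])
  finally show ?thesis .
qed

lemma commutator_word_zero: "commutator_word (\<lambda>x\<in>upper_pairs k. 0) = \<one>\<^bsub>H\<^esub>"
  unfolding commutator_word_def
  using kernel_group.finprod_one_eqI [of "upper_pairs k"] by simp

lemma commutator_word_single:
  assumes y: "y \<in> upper_pairs k"
  shows "commutator_word (single_coeff y s) = lift_commutator y [^]\<^bsub>H\<^esub> (s::nat)"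
proof -
  have "commutator_word (single_coeff y s) =
      finprod kernel_group (\<lambda>x. if x = y then lift_commutator x [^]\<^bsub>H\<^esub> s else \<one>\<^bsub>kernel_group\<^esub>)
        (upper_pairs k)"
    unfolding commutator_word_def using lift_commutator_pow_in_kernel
  proof (intro kernel_group.finprod_cong')
    fix x assume "x \<in> upper_pairs k"
    then show "lift_commutator x [^]\<^bsub>H\<^esub> single_coeff y s x =
        (if x = y then lift_commutator x [^]\<^bsub>H\<^esub> s else \<one>\<^bsub>kernel_group\<^esub>)"
      by (cases "x = y") (simp_all add: single_coeff_def lift_commutator_pow_mod [OF y, of s, symmetric])
  qed (auto simp: kernel_iff)
  also have "\<dots> = lift_commutator y [^]\<^bsub>H\<^esub> s"
    using kernel_group.finprod_singleton_swap [OF y finite_upper_pairs,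
        of "\<lambda>x. lift_commutator x [^]\<^bsub>H\<^esub> s"]
    by (simp add: Pi_def lift_commutator_pow_in_kernel)
  finally show ?thesis .
qed

lemma inv_commutator_word:
  "inv\<^bsub>H\<^esub> commutator_word n =
    commutator_word (\<lambda>x\<in>upper_pairs k. (p ^ r (snd x) - n x mod p ^ r (snd x)) mod p ^ r (snd x))"
proof (rule H.inv_equality)
  have "(\<lambda>x\<in>upper_pairs k. ((\<lambda>x\<in>upper_pairs k. (p ^ r (snd x) - n x mod p ^ r (snd x)) mod p ^ r (snd x)) x
          + n x) mod p ^ r (snd x)) = (\<lambda>x\<in>upper_pairs k. 0)"
    by (intro restrict_ext) (simp add: mod_add_left_eq add_diff_mod_self)
  then show "commutator_word (\<lambda>x\<in>upper_pairs k. (p ^ r (snd x) - n x mod p ^ r (snd x)) mod p ^ r (snd x))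
      \<otimes>\<^bsub>H\<^esub> commutator_word n = \<one>\<^bsub>H\<^esub>"
    by (simp add: commutator_word_mult commutator_word_zero)
qed (use commutator_word_in_kernel in \<open>simp_all add: kernel_iff\<close>)

lemma subgroup_commutator_words: "subgroup (commutator_word ` pair_coeffs p r k) H"
proof (rule H.subgroupI)
  show "commutator_word ` pair_coeffs p r k \<subseteq> carrier H"
    using commutator_word_in_kernel by (auto simp: kernel_iff)
  show "commutator_word ` pair_coeffs p r k \<noteq> {}"
    using restrict_mod_in_pair_coeffs by blast
qed (auto simp: inv_commutator_word commutator_word_mult restrict_mod_in_pair_coeffs)

lemma commutator_lifts_in_commutator_words:
  assumes "i < k" "j < k"
  shows "commutator H (lift i) (lift j) \<in> commutator_word ` pair_coeffs p r k"
proof -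
  interpret words: subgroup "commutator_word ` pair_coeffs p r k" H
    by (rule subgroup_commutator_words)
  have lift_commutator: "lift_commutator (i, j) \<in> commutator_word ` pair_coeffs p r k"
    if "i < j" "j < k" for i j
  proof
    show "lift_commutator (i, j) = commutator_word (single_coeff (i, j) 1)"
      using that commutator_word_single [of "(i, j)" 1] by (simp add: upper_pairs_def)
  qed (rule single_coeff_in_pair_coeffs)
  consider "i < j" | "i = j" | "j < i"
    by linarith
  then show ?thesis
  proof cases
    case 1
    then show ?thesis
      using lift_commutator assms by (simp add: lift_commutator_def)
  next
    case 2
    then show ?thesis
      using assms by (simp add: H.commutator_self)
  next
    case 3
    then have "inv\<^bsub>H\<^esub> lift_commutator (j, i) \<in> commutator_word ` pair_coeffs p r k"
      using lift_commutator assms by simp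
    then show ?thesis
      using assms by (simp add: lift_commutator_def H.inv_commutator)
  qed
qed

lemma commutator_in_commutator_words:
  assumes "a \<in> carrier H" "b \<in> carrier H"
  shows "commutator H a b \<in> commutator_word ` pair_coeffs p r k"
proof -
  interpret words: subgroup "commutator_word ` pair_coeffs p r k" H
    by (rule subgroup_commutator_words)
  have lift: "commutator H (lift j) b \<in> commutator_word ` pair_coeffs p r k"
    if "j < k" "b \<in> carrier H" for j b
    using \<open>b \<in> carrier H\<close>
    by (rule carrier_induct) (use that in \<open>simp_all add: commutator_mult_right commutator_kernel_right
        commutator_lifts_in_commutator_words\<close>)
  have "\<forall>b\<in>carrier H. commutator H a b \<in> commutator_word ` pair_coeffs p r k"
    using \<open>a \<in> carrier H\<close>
    by (rule carrier_induct) (simp_all add: commutator_mult_left commutator_kernel_left lift)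
  then show ?thesis
    using assms by blast
qed

lemma kernel_subset_commutator_words: "K \<subseteq> commutator_word ` pair_coeffs p r k"
proof -
  have "K \<subseteq> derived H (carrier H)"
    using stem by (simp add: stem_extension_def)
  also have "\<dots> \<subseteq> commutator_word ` pair_coeffs p r k"
    unfolding derived_def derived_set_eq_commutators
    using commutator_in_commutator_words subgroup_commutator_words
    by (intro H.generate_subgroup_incl) auto
  finally show ?thesis .
qed

(* This is where the maximality of the Schur cover enters. *)
lemma inj_on_commutator_word: "inj_on commutator_word (pair_coeffs p r k)"
proof (rule eq_card_imp_inj_on [OF finite_pair_coeffs])
  have "commutator_word ` pair_coeffs p r k = K"
    using kernel_subset_commutator_words commutator_word_in_kernel by blast
  then have "card (pair_coeffs p r k) \<le> card (commutator_word ` pair_coeffs p r k)"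
    using schur_cover_card_kernel_ge [OF schur_cover] by simp
  then show "card (commutator_word ` pair_coeffs p r k) = card (pair_coeffs p r k)"
    using card_image_le [OF finite_pair_coeffs [of p r k], of commutator_word] by linarith
qed

lemma commutator_word_eq_one_iff:
  assumes "n \<in> pair_coeffs p r k"
  shows "commutator_word n = \<one>\<^bsub>H\<^esub> \<longleftrightarrow> n = (\<lambda>x\<in>upper_pairs k. 0)"
  using inj_on_eq_iff [OF inj_on_commutator_word assms zero_in_pair_coeffs]
  by (simp add: commutator_word_zero)

end

section \<open>Dominant vertices\<close>

context cyc_exponents
begin

(* The factors are indexed from 0, so r 1 is the second largest exponent (the paper's r_2). *)
definition first_factor_multiples :: "(nat \<Rightarrow> nat) set" where
  "first_factor_multiples = {f \<in> carrier G. (\<forall>i. i \<noteq> 0 \<longrightarrow> f i = 0) \<and> p ^ r 1 dvd f 0}"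

lemma generate_pow_eq_first_factor_multiples:
  assumes k: "2 \<le> k" and x1: "x1 \<in> carrier G"
    and gen_x1: "generate G {x1} = {f \<in> carrier G. \<forall>i. i \<noteq> 0 \<longrightarrow> f i = 0}"
  shows "generate G {x1 [^]\<^bsub>G\<^esub> (p ^ r 1)} = first_factor_multiples"
proof -
  have powers: "generate G {y} = {y [^]\<^bsub>G\<^esub> n | n. n \<in> (UNIV :: nat set)}" if "y \<in> carrier G" for y
    using G.generate_pow_on_finite_carrier [OF finite_cyc_prod_carrier that] .
  have x1_0: "x1 i = 0" if "i \<noteq> 0" for i
    using gen_x1 generate.incl [of x1 "{x1}" G] that by auto
  have dvd: "p ^ r 1 dvd p ^ r 0"
    using k by (simp add: modulus_dvd)
  show ?thesis
  proof (intro equalityI subsetI)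
    fix f assume "f \<in> generate G {x1 [^]\<^bsub>G\<^esub> (p ^ r 1)}"
    then obtain n where n: "f = x1 [^]\<^bsub>G\<^esub> (p ^ r 1 * n)"
      using x1 by (auto simp: powers G.nat_pow_pow)
    then have "f \<in> carrier G"
      using x1 by simp
    then show "f \<in> first_factor_multiples"
      using n x1 x1_0 k dvd by (auto simp: first_factor_multiples_def cyc_prod_pow intro!: dvd_mod)
  next
    fix f assume f: "f \<in> first_factor_multiples"
    then obtain q where q: "f 0 = p ^ r 1 * q"
      by (auto simp: first_factor_multiples_def)
    have "cyc_unit 0 \<in> carrier G"
      using k by simp
    then have "cyc_unit 0 \<in> generate G {x1}"
      by (simp add: gen_x1 cyc_unit_def)
    then obtain n :: nat where n: "cyc_unit 0 = x1 [^]\<^bsub>G\<^esub> n"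
      using powers [OF x1] by auto
    have "f = cyc_unit 0 [^]\<^bsub>G\<^esub> f 0"
      using f k by (auto simp: first_factor_multiples_def cyc_unit_pow cyc_prod_carrier_iff fun_eq_iff)
    also have "\<dots> = (x1 [^]\<^bsub>G\<^esub> (p ^ r 1)) [^]\<^bsub>G\<^esub> (n * q)"
      using x1 by (simp add: n q G.nat_pow_pow ac_simps)
    finally show "f \<in> generate G {x1 [^]\<^bsub>G\<^esub> (p ^ r 1)}"
      using x1 by (auto simp: powers)
  qed
qed

end

context cyc_schur_cover
begin

lemma \<pi>_lift0_pow: "0 < k \<Longrightarrow> \<pi> (lift 0 [^]\<^bsub>H\<^esub> (s::nat)) = (\<lambda>i. if i = 0 then s mod p ^ r 0 else 0)"
  by (simp add: hom.hom_nat_pow cyc_unit_pow)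

lemma commutator_lift0_lift_pow:
  assumes "j < k"
  shows "commutator H (lift 0) (lift j [^]\<^bsub>H\<^esub> (s::nat)) = commutator_word (single_coeff (0, j) s)"
proof (cases "j = 0")
  case True
  then have "single_coeff (0, j) s = (\<lambda>x\<in>upper_pairs k. 0)"
    unfolding single_coeff_def by (intro restrict_ext) (auto simp: upper_pairs_def)
  then show ?thesis
    using assms True by (simp add: commutator_pow_right H.commutator_self commutator_word_zero)
next
  case False
  then have "(0, j) \<in> upper_pairs k"
    using assms by (simp add: upper_pairs_def)
  then show ?thesis
    using assms by (simp add: commutator_word_single commutator_pow_right lift_commutator_def)
qed

lemma commutator_lift0_lift_word:
  "0 < k \<Longrightarrow> n \<le> k \<Longrightarrow> commutator H (lift 0) (lift_word g n) = commutator_word (first_row_coeffs g n)"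
proof (induction n)
  case 0
  then have "commutator H (lift 0) (lift_word g 0) = commutator_word (\<lambda>x\<in>upper_pairs k. 0)"
    by (simp add: commutator_word_zero)
  also have "(\<lambda>x\<in>upper_pairs k. 0) = first_row_coeffs g 0"
    unfolding first_row_coeffs_def by (intro restrict_ext) simp
  finally show ?case .
next
  case (Suc n)
  then have "commutator H (lift 0) (lift_word g (Suc n)) =
      commutator_word (first_row_coeffs g n) \<otimes>\<^bsub>H\<^esub> commutator_word (single_coeff (0, n) (g n))"
    by (simp add: commutator_mult_right commutator_lift0_lift_pow)
  also have "\<dots> = commutator_word (first_row_coeffs g (Suc n))"
    by (simp only: commutator_word_mult first_row_coeffs_Suc)
  finally show ?case .
qed

lemma \<pi>_pow_modulus_1:
  assumes "2 \<le> k" "b \<in> carrier H"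
  shows "\<pi> (b [^]\<^bsub>H\<^esub> (p ^ r 1)) = \<pi> (lift 0 [^]\<^bsub>H\<^esub> (p ^ r 1 * \<pi> b 0))"
proof -
  have "p ^ r 1 * \<pi> b i mod p ^ r i = 0" if "i \<noteq> 0" "i < k" for i
    using that modulus_dvd [of 1 i] by simp
  then show ?thesis
    using assms by (auto simp: hom.hom_nat_pow cyc_prod_pow cyc_unit_def fun_eq_iff)
qed

lemma first_factor_multiple_central:
  assumes k: "2 \<le> k" and a: "a \<in> carrier H" "\<pi> a \<in> first_factor_multiples" and b: "b \<in> carrier H"
  shows "commutator H a b = \<one>\<^bsub>H\<^esub>"
proof -
  obtain q where q: "\<pi> a 0 = p ^ r 1 * q"
    using a by (auto simp: first_factor_multiples_def)
  have "\<pi> (lift 0 [^]\<^bsub>H\<^esub> \<pi> a 0) = \<pi> a"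
    using a k by (auto simp: \<pi>_lift0_pow first_factor_multiples_def cyc_prod_carrier_iff fun_eq_iff)
  then have "commutator H a b = commutator H (lift 0 [^]\<^bsub>H\<^esub> \<pi> a 0) b"
    using a b k by (intro commutator_cong) auto
  also have "\<dots> = commutator H (lift 0) (b [^]\<^bsub>H\<^esub> (p ^ r 1)) [^]\<^bsub>H\<^esub> q"
    using b k by (simp add: q commutator_pow_left commutator_pow_right H.nat_pow_pow)
  also have "commutator H (lift 0) (b [^]\<^bsub>H\<^esub> (p ^ r 1)) =
      commutator H (lift 0) (lift 0 [^]\<^bsub>H\<^esub> (p ^ r 1 * \<pi> b 0))"
    using b k \<pi>_pow_modulus_1 [OF k b] by (intro commutator_cong) auto
  finally show ?thesis
    using k by (simp add: commutator_pow_right H.commutator_self)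
qed

lemma commutator_lift0_lift_word_ne_one:
  assumes "0 < k" "f \<in> carrier G" "j \<noteq> 0" "f j \<noteq> 0"
  shows "commutator H (lift 0) (lift_word f k) \<noteq> \<one>\<^bsub>H\<^esub>"
proof -
  have "j < k"
    using assms by (meson cyc_prod_carrier_iff not_less)
  then have "first_row_coeffs f k (0, j) \<noteq> 0" "(0, j) \<in> upper_pairs k"
    using assms by (simp_all add: first_row_coeffs_def upper_pairs_def cyc_prod_carrier_iff)
  then have "first_row_coeffs f k \<noteq> (\<lambda>x\<in>upper_pairs k. 0)"
    by auto
  moreover have "first_row_coeffs f k \<in> pair_coeffs p r k"
    by (auto simp: first_row_coeffs_def pair_coeffs_def)
  ultimately show ?thesis
    using assms by (simp add: commutator_lift0_lift_word commutator_word_eq_one_iff)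
qed

lemma commutator_lift0_pow_lift1_ne_one:
  assumes "2 \<le> k" "\<not> p ^ r 1 dvd s"
  shows "commutator H (lift 0 [^]\<^bsub>H\<^esub> s) (lift 1) \<noteq> \<one>\<^bsub>H\<^esub>"
proof -
  have y: "(0, 1) \<in> upper_pairs k"
    using assms by (simp add: upper_pairs_def)
  then have "single_coeff (0, 1) s (0, 1) \<noteq> 0"
    using assms by (simp add: single_coeff_def mod_eq_0_iff_dvd)
  then have "single_coeff (0, 1) s \<noteq> (\<lambda>x\<in>upper_pairs k. 0)"
    using y by auto
  moreover have "commutator H (lift 0 [^]\<^bsub>H\<^esub> s) (lift 1) = commutator_word (single_coeff (0, 1) s)"
    using assms y by (simp add: commutator_word_single commutator_pow_left lift_commutator_def)
  ultimately show ?thesis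
    by (simp add: commutator_word_eq_one_iff single_coeff_in_pair_coeffs)
qed

lemma central_iff_first_factor_multiple:
  assumes k: "2 \<le> k" and a: "a \<in> carrier H"
  shows "(\<forall>b\<in>carrier H. commutator H a b = \<one>\<^bsub>H\<^esub>) \<longleftrightarrow> \<pi> a \<in> first_factor_multiples"
proof
  assume central: "\<forall>b\<in>carrier H. commutator H a b = \<one>\<^bsub>H\<^esub>"
  have f: "\<pi> a \<in> carrier G"
    using a by simp
  show "\<pi> a \<in> first_factor_multiples"
  proof (cases "\<exists>j. j \<noteq> 0 \<and> \<pi> a j \<noteq> 0")
    case True
    then obtain j where j: "j \<noteq> 0" "\<pi> a j \<noteq> 0"
      by blast
    have "commutator H (lift 0) (lift_word (\<pi> a) k) = commutator H (lift 0) a"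
      using a k f by (intro commutator_cong) (auto simp: \<pi>_lift_word_self)
    also have "\<dots> = inv\<^bsub>H\<^esub> commutator H a (lift 0)"
      using a k by (simp add: H.inv_commutator)
    also have "\<dots> = \<one>\<^bsub>H\<^esub>"
      using central k by simp
    finally show ?thesis
      using commutator_lift0_lift_word_ne_one [OF _ f j] k by simp
  next
    case False
    then have zero: "\<pi> a i = 0" if "i \<noteq> 0" for i
      using that by blast
    then have "\<pi> (lift 0 [^]\<^bsub>H\<^esub> \<pi> a 0) = \<pi> a"
      using f k by (auto simp: \<pi>_lift0_pow cyc_prod_carrier_iff fun_eq_iff)
    then have "commutator H (lift 0 [^]\<^bsub>H\<^esub> \<pi> a 0) (lift 1) = commutator H a (lift 1)"
      using a k by (intro commutator_cong) auto
    then have "p ^ r 1 dvd \<pi> a 0"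
      using central commutator_lift0_pow_lift1_ne_one [OF k] k by force
    then show ?thesis
      using zero f by (auto simp: first_factor_multiples_def)
  qed
qed (use first_factor_multiple_central [OF k a] in blast)

lemma dominant_vertices_eq_first_factor_multiples:
  assumes k: "2 \<le> k"
  shows "dominant_vertices H \<pi> G = first_factor_multiples"
proof (intro equalityI subsetI)
  fix f assume f: "f \<in> first_factor_multiples"
  then have "deep_adj H \<pi> f h" if "h \<noteq> f" for h
    using that first_factor_multiple_central [OF k] H.commutator_eq_one_iff
    by (auto simp: deep_adj_def)
  then show "f \<in> dominant_vertices H \<pi> G"
    using f by (auto simp: dominant_vertices_def first_factor_multiples_def)
next
  fix f assume f: "f \<in> dominant_vertices H \<pi> G"
  then have f_carrier: "f \<in> carrier G"
    by (simp add: dominant_vertices_def)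
  define a where "a = lift_word f k"
  have a: "a \<in> carrier H" "\<pi> a = f"
    using f_carrier by (simp_all add: a_def \<pi>_lift_word_self)
  have "commutator H a b = \<one>\<^bsub>H\<^esub>" if b: "b \<in> carrier H" for b
  proof (cases "\<pi> b = f")
    case True
    then have "commutator H a b = commutator H a a"
      using a b by (intro commutator_cong) auto
    then show ?thesis
      using a by (simp add: H.commutator_self)
  next
    case False
    then have "deep_adj H \<pi> f (\<pi> b)"
      using f b by (auto simp: dominant_vertices_def)
    then show ?thesis
      using a b by (auto simp: deep_adj_def H.commutator_eq_one_iff)
  qed
  then show "f \<in> first_factor_multiples"
    using central_iff_first_factor_multiple [OF k a(1)] a(2) by simp
qed

end

theorem theorem4p4:
  fixes p k :: nat and r :: "nat \<Rightarrow> nat" and x1 :: "nat \<Rightarrow> nat"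
    and H :: "('c, 'd) monoid_scheme" and \<pi> :: "'c \<Rightarrow> (nat \<Rightarrow> nat)"
  assumes "Factorial_Ring.prime p"
    and "k \<ge> 2"
    and "\<forall>i<k. r i \<ge> 1"
    and "\<forall>i j. i \<le> j \<and> j < k \<longrightarrow> r j \<le> r i"
    and "\<not> (\<exists>g \<in> carrier (cyc_prod p r k). generate (cyc_prod p r k) {g} = carrier (cyc_prod p r k))"
    and "x1 \<in> carrier (cyc_prod p r k)"
    and "generate (cyc_prod p r k) {x1} = {f \<in> carrier (cyc_prod p r k). \<forall>i. i \<noteq> 0 \<longrightarrow> f i = 0}"
    and "schur_cover H \<pi> (cyc_prod p r k)"
  shows "dominant_vertices H \<pi> (cyc_prod p r k)
           = generate (cyc_prod p r k) {x1 [^]\<^bsub>cyc_prod p r k\<^esub> (p ^ r 1)}"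
proof -
  (* Primality of p is only used as 1 < p, and non-cyclicity already follows from 2 <= k. *)
  interpret cyc_schur_cover p r k H \<pi>
    using assms(1,3,4,8) prime_gt_1_nat by unfold_locales auto
  show ?thesis
    using dominant_vertices_eq_first_factor_multiples [OF assms(2)]
      generate_pow_eq_first_factor_multiples [OF assms(2,6,7)]
    by simp
qed

end
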